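(* Let $p,q\ge0$ be integers, $n=p+q\ge1$, and $a\in\mathbb{R}_{p,q}$. Then: (a) if $n$ is even, $\displaystyle \langle a\rangle_0=\frac{1}{2^n}\sum_{J} e_J\, a\, e^J$; (b) if $n$ is odd, $\displaystyle \langle a\rangle_0=\frac{1}{2^{n+1}}\sum_{J} e_J\, a\, e^J+\frac{1}{2^{n+1}}\sum_{J} e_J\, a_*\, e^J$, where in both cases the sum runs over all strictly increasing multi-indices $J\subset\{1,\dots,n\}$ (of every length $0,1,\dots,n$, including the empty one).
   Context: $\mathbb{R}_{p,q}$ is the universal real Clifford algebra of $\mathbb{R}^n$, $n=p+q$, with basis $\{e_A\}$ indexed by strictly increasing multi-indices $A=(a_1<\dots<a_k)\subset\{1,\dots,n\}$ (with $e_\emptyset=1$, $e_A=e_{a_1}\cdots e_{a_k}$), subject to $e_i^2=1$ for $1\le i\le p$, $e_i^2=-1$ for $p+1\le i\le n$, and $e_ie_j=-e_je_i$ for $i\neq j$. Every $a\in\mathbb{R}_{p,q}$ decomposes as $a=\sum_{k=0}^n\langle a\rangle_k$ with $\langle a\rangle_k=\sum_{|A|=k}a_Ae_A$, $a_A\in\mathbb{R}$; $\langle a\rangle_0$ is the scalar part. The principal automorphism is $a_*=\sum_{k=0}^n(-1)^k\langle a\rangle_k$. Define $e^i=e_i$ if $1\le i\le p$ and $e^i=-e_i$ if $p+1\le i\le n$, and for $J=(j_1<\dots<j_k)$ set $e^J=e^{j_k}e^{j_{k-1}}\cdots e^{j_1}$ (with $e^\emptyset=1$). *)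

theory Defs
  imports Complex_Main
begin

text \<open>The universal real Clifford algebra R_{p,q} of R^n, n = p+q, realised concretely:
  an element is its coefficient family (a_A) indexed by subsets A of {1..n}
  (coefficients outside Pow {1..n} are required to be zero).  The product is the
  bilinear extension of the basis product
  e_A e_B = (-1)^(#{(a,b) in A x B. b < a}) * (prod of e_i^2 for i in A inter B) * e_(A sym-diff B),
  which is exactly what e_i^2 = 1 (i<=p), e_i^2 = -1 (p<i<=n), e_i e_j = - e_j e_i give.\<close>

type_synonym cl = "nat set \<Rightarrow> real"

definition cl_sign :: "nat \<Rightarrow> nat set \<Rightarrow> nat set \<Rightarrow> real" where
  "cl_sign p A B = (-1) ^ card {(a, b). a \<in> A \<and> b \<in> B \<and> b < a}
                 * (-1) ^ card {i \<in> A \<inter> B. p < i}"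

definition cl_mult :: "nat \<Rightarrow> nat \<Rightarrow> cl \<Rightarrow> cl \<Rightarrow> cl" where
  "cl_mult p q x y = (\<lambda>C. \<Sum>A\<in>Pow {1..p+q}. \<Sum>B\<in>Pow {1..p+q}.
      if (A - B) \<union> (B - A) = C then x A * y B * cl_sign p A B else 0)"

definition cl_basis :: "nat set \<Rightarrow> cl" where
  "cl_basis A = (\<lambda>C. if C = A then 1 else 0)"

definition cl_carrier :: "nat \<Rightarrow> nat \<Rightarrow> cl set" where
  "cl_carrier p q = {x. \<forall>A. \<not> A \<subseteq> {1..p+q} \<longrightarrow> x A = 0}"

definition cl_grade0 :: "cl \<Rightarrow> cl" where
  "cl_grade0 a = (\<lambda>C. if C = {} then a {} else 0)"

definition cl_star :: "cl \<Rightarrow> cl" where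
  "cl_star a = (\<lambda>A. (-1) ^ card A * a A)"

definition cl_up :: "nat \<Rightarrow> nat \<Rightarrow> cl" where
  "cl_up p i = (\<lambda>C. if C = {i} then (if i \<le> p then 1 else -1) else 0)"

text \<open>e^J = e^{j_k} e^{j_(k-1)} ... e^{j_1} for J = (j_1 < ... < j_k); e^{} = 1.\<close>
definition cl_upJ :: "nat \<Rightarrow> nat \<Rightarrow> nat set \<Rightarrow> cl" where
  "cl_upJ p q J = foldr (cl_mult p q) (map (cl_up p) (rev (sorted_list_of_set J))) (cl_basis {})"

end

theory Submission
  imports Defs
begin

text \<open>Conjugation by a basis blade is diagonal: e_J e_C e^J = (-1)^(|J| |C| + |J \<inter> C|) e_C.
  So the coefficient of e_C in the sum of all conjugates e_J a e^J is a_C times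
  the sum over J of the product over i in J of (-1)^(|C| + [i \<in> C]), which factors as the
  product over i in {1..n} of 1 + (-1)^(|C| + [i \<in> C]).  Every factor is 0 or 2, and all are 2
  exactly when C is empty or, for odd n, when C = {1..n}.  Thus the sum is 2^n times the scalar
  part, plus for odd n 2^n times the pseudoscalar part, which is cancelled by the same sum for a_*
  because a_* negates odd grades.\<close>

definition cl_monomial :: "nat set \<Rightarrow> real \<Rightarrow> cl" where
  "cl_monomial J s = (\<lambda>A. if A = J then s else 0)"

lemma cl_basis_eq_monomial: "cl_basis J = cl_monomial J 1"
  by (simp add: cl_basis_def cl_monomial_def)

lemma cl_up_eq_monomial: "cl_up p i = cl_monomial {i} (if i \<le> p then 1 else -1)"
  by (simp add: cl_up_def cl_monomial_def)

lemma sym_diff_eq_iff: "sym_diff A B = C \<longleftrightarrow> B = sym_diff A C"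
  by blast

lemma cl_mult_monomial_left:
  assumes "J \<subseteq> {1..p+q}"
  shows "cl_mult p q (cl_monomial J s) x C =
           (if sym_diff J C \<subseteq> {1..p+q} then s * x (sym_diff J C) * cl_sign p J (sym_diff J C) else 0)"
proof -
  have "cl_mult p q (cl_monomial J s) x C =
          (\<Sum>A\<in>Pow {1..p+q}. if A = J
             then (\<Sum>B\<in>Pow {1..p+q}. if sym_diff J B = C then s * x B * cl_sign p J B else 0) else 0)"
    unfolding cl_mult_def cl_monomial_def by (intro sum.cong refl) (simp cong: if_cong)
  also have "\<dots> = (\<Sum>B\<in>Pow {1..p+q}. if sym_diff J B = C then s * x B * cl_sign p J B else 0)"
    using assms by simp
  also have "\<dots> = (\<Sum>B\<in>Pow {1..p+q}. if B = sym_diff J C then s * x B * cl_sign p J B else 0)"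
    unfolding sym_diff_eq_iff ..
  finally show ?thesis
    by simp
qed

lemma cl_mult_monomial_right:
  assumes "J \<subseteq> {1..p+q}"
  shows "cl_mult p q x (cl_monomial J s) C =
           (if sym_diff J C \<subseteq> {1..p+q} then x (sym_diff J C) * s * cl_sign p (sym_diff J C) J else 0)"
proof -
  have "cl_mult p q x (cl_monomial J s) C =
          (\<Sum>A\<in>Pow {1..p+q}. \<Sum>B\<in>Pow {1..p+q}. if B = J
             then (if sym_diff J A = C then x A * s * cl_sign p A J else 0) else 0)"
    unfolding cl_mult_def cl_monomial_def by (intro sum.cong refl) (auto simp: Un_commute)
  also have "\<dots> = (\<Sum>A\<in>Pow {1..p+q}. if sym_diff J A = C then x A * s * cl_sign p A J else 0)"
    using assms by simp
  also have "\<dots> = (\<Sum>A\<in>Pow {1..p+q}. if A = sym_diff J C then x A * s * cl_sign p A J else 0)"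
    unfolding sym_diff_eq_iff ..
  finally show ?thesis
    by simp
qed

lemma cl_mult_monomial_monomial:
  assumes "A \<subseteq> {1..p+q}" "B \<subseteq> {1..p+q}"
  shows "cl_mult p q (cl_monomial A s) (cl_monomial B t) = cl_monomial (sym_diff A B) (s * t * cl_sign p A B)"
proof
  fix C
  have "sym_diff A C = B \<longleftrightarrow> C = sym_diff A B"
    by blast
  moreover have "sym_diff A (sym_diff A B) \<subseteq> {1..p+q}"
    using assms by blast
  ultimately show "cl_mult p q (cl_monomial A s) (cl_monomial B t) C =
      cl_monomial (sym_diff A B) (s * t * cl_sign p A B) C"
    unfolding cl_mult_monomial_left[OF assms(1)] by (cases "C = sym_diff A B") (auto simp: cl_monomial_def)
qed

definition inversions :: "'a::linorder set \<Rightarrow> 'a set \<Rightarrow> nat" where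
  "inversions X Y = card {(a, b). a \<in> X \<and> b \<in> Y \<and> b < a}"

lemma cl_sign_eq_inversions: "cl_sign p A B = (-1) ^ (inversions A B + card {i \<in> A \<inter> B. p < i})"
  by (simp add: cl_sign_def inversions_def power_add)

lemma finite_inversion_pairs:
  "finite X \<Longrightarrow> finite Y \<Longrightarrow> finite {(a, b). a \<in> X \<and> b \<in> Y \<and> P a b}"
  by (rule finite_subset[of _ "X \<times> Y"]) auto

lemma inversions_Un_left:
  assumes "finite X1" "finite X2" "finite Y" "X1 \<inter> X2 = {}"
  shows "inversions (X1 \<union> X2) Y = inversions X1 Y + inversions X2 Y"
proof -
  have "{(a, b). a \<in> X1 \<union> X2 \<and> b \<in> Y \<and> b < a} =
      {(a, b). a \<in> X1 \<and> b \<in> Y \<and> b < a} \<union> {(a, b). a \<in> X2 \<and> b \<in> Y \<and> b < a}"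
    by auto
  then show ?thesis
    using assms unfolding inversions_def by (auto intro: card_Un_disjoint finite_inversion_pairs)
qed

lemma inversions_Un_right:
  assumes "finite X" "finite Y1" "finite Y2" "Y1 \<inter> Y2 = {}"
  shows "inversions X (Y1 \<union> Y2) = inversions X Y1 + inversions X Y2"
proof -
  have "{(a, b). a \<in> X \<and> b \<in> Y1 \<union> Y2 \<and> b < a} =
      {(a, b). a \<in> X \<and> b \<in> Y1 \<and> b < a} \<union> {(a, b). a \<in> X \<and> b \<in> Y2 \<and> b < a}"
    by auto
  then show ?thesis
    using assms unfolding inversions_def by (auto intro: card_Un_disjoint finite_inversion_pairs)
qed

lemma inversions_add_inversions_swap:
  assumes "finite X" "finite Y" "X \<inter> Y = {}"
  shows "inversions X Y + inversions Y X = card X * card Y"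
proof -
  let ?S = "{(a, b). a \<in> X \<and> b \<in> Y \<and> b < a}" and ?T = "{(a, b). a \<in> X \<and> b \<in> Y \<and> a < b}"
  have "{(a, b). a \<in> Y \<and> b \<in> X \<and> b < a} = prod.swap ` ?T"
    by auto
  then have "inversions Y X = card ?T"
    unfolding inversions_def by (simp add: card_image)
  moreover have "X \<times> Y = ?S \<union> ?T"
    using assms by auto
  then have "card X * card Y = card ?S + card ?T"
    using assms by (auto simp: card_cartesian_product[symmetric] intro: card_Un_disjoint finite_inversion_pairs)
  ultimately show ?thesis
    by (simp add: inversions_def)
qed

lemma inversions_greater_left: "\<forall>a\<in>A. a < b \<Longrightarrow> inversions {b} A = card A"
proof -
  assume "\<forall>a\<in>A. a < b"
  then have "{(a, c). a \<in> {b} \<and> c \<in> A \<and> c < a} = Pair b ` A"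
    by auto
  then show ?thesis
    by (simp add: inversions_def card_image inj_on_def)
qed

lemma inversions_greater_right: "\<forall>a\<in>A. a \<le> b \<Longrightarrow> inversions A {b} = 0"
proof -
  assume "\<forall>a\<in>A. a \<le> b"
  then have "{(a, c). a \<in> A \<and> c \<in> {b} \<and> c < a} = {}"
    by (auto dest: leD)
  then show ?thesis
    unfolding inversions_def by (metis card.empty)
qed

lemma card_filter_insert:
  assumes "finite A" "b \<notin> A"
  shows "card {i \<in> insert b A. P i} = card {i \<in> A. P i} + of_bool (P b)"
proof (cases "P b")
  case True
  then have "{i \<in> insert b A. P i} = insert b {i \<in> A. P i}"
    by auto
  then show ?thesis
    using True assms by simp
next
  case False
  then have "{i \<in> insert b A. P i} = {i \<in> A. P i}"
    by auto
  then show ?thesis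
    using False by simp
qed

lemma cl_sign_insert_greater_self:
  assumes "finite A" "\<forall>a\<in>A. a < b"
  shows "cl_sign p (insert b A) (insert b A) = (if p < b then -1 else 1) * (-1) ^ card A * cl_sign p A A"
proof -
  have "b \<notin> A"
    using assms(2) by auto
  moreover have "inversions (insert b A) (insert b A) = card A + inversions A A"
    using inversions_Un_left[of "{b}" A "{b} \<union> A"] inversions_Un_right[of "{b}" "{b}" A]
      inversions_Un_right[of A "{b}" A] inversions_greater_left[of A b]
      inversions_greater_right[of "{b}" b] inversions_greater_right[of A b] assms \<open>b \<notin> A\<close>
    by (simp add: order_less_imp_le)
  moreover have "card {i \<in> insert b A \<inter> insert b A. p < i} = card {i \<in> A \<inter> A. p < i} + of_bool (p < b)"
    using card_filter_insert[OF assms(1) \<open>b \<notin> A\<close>] by simp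
  ultimately show ?thesis
    unfolding cl_sign_eq_inversions by (simp add: power_add)
qed

lemma cl_upJ_eq_monomial:
  assumes "J \<subseteq> {1..p+q}"
  shows "cl_upJ p q J = cl_monomial J (cl_sign p J J)"
proof -
  have "finite J"
    using assms finite_subset by blast
  from this assms show ?thesis
  proof (induction J rule: finite_linorder_max_induct)
    case empty
    then show ?case
      by (simp add: cl_upJ_def cl_basis_eq_monomial cl_sign_def)
  next
    case (insert b A)
    then have "b \<notin> A" and "sym_diff {b} A = insert b A"
      by auto
    have "sorted_list_of_set (insert b A) = sorted_list_of_set A @ [b]"
      using insert \<open>b \<notin> A\<close> by (simp add: sorted_list_of_set_insert sorted_insort_is_snoc less_imp_le)
    then have "cl_upJ p q (insert b A) = cl_mult p q (cl_up p b) (cl_upJ p q A)"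
      by (simp add: cl_upJ_def)
    also have "\<dots> = cl_mult p q (cl_monomial {b} (if b \<le> p then 1 else -1)) (cl_monomial A (cl_sign p A A))"
      using insert by (simp add: cl_up_eq_monomial)
    also have "\<dots> = cl_monomial (insert b A) (cl_sign p (insert b A) (insert b A))"
    proof -
      have "cl_sign p {b} A = (-1) ^ card A"
        using insert \<open>b \<notin> A\<close> inversions_greater_left[of A b] by (simp add: cl_sign_eq_inversions)
      then show ?thesis
        using insert \<open>sym_diff {b} A = insert b A\<close>
        by (simp add: cl_mult_monomial_monomial cl_sign_insert_greater_self mult.commute)
    qed
    finally show ?case .
  qed
qed

text \<open>For J = P \<union> Q and C = P \<union> R with P = J \<inter> C, these are the inversion counts of the
  three signs in e_J e_C e^J.\<close>

lemma even_conjugation_exponent: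
  fixes P Q R :: "'a::linorder set"
  assumes "finite P" "finite Q" "finite R" "P \<inter> Q = {}" "P \<inter> R = {}" "Q \<inter> R = {}"
  shows "even (inversions (P \<union> Q) (P \<union> R) + inversions (Q \<union> R) (P \<union> Q) + inversions (P \<union> Q) (P \<union> Q)
               + ((card P + card Q) * (card P + card R) + card P))"
proof -
  have "inversions (P \<union> Q) (P \<union> R) + inversions (Q \<union> R) (P \<union> Q) + inversions (P \<union> Q) (P \<union> Q)
      = 2 * (inversions P P + inversions Q P + inversions Q Q)
        + (inversions P Q + inversions Q P) + (inversions P R + inversions R P) + (inversions Q R + inversions R Q)"
    using assms by (simp add: inversions_Un_left inversions_Un_right)
  also have "\<dots> = 2 * (inversions P P + inversions Q P + inversions Q Q)
        + card P * card Q + card P * card R + card Q * card R"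
    using assms by (simp add: inversions_add_inversions_swap)
  finally show ?thesis
    by (simp add: algebra_simps)
qed

lemma minus_one_power_eq_if_even_add: "even (m + n) \<Longrightarrow> (-1 :: 'a::ring_1) ^ m = (-1) ^ n"
  by (auto simp: minus_one_power_iff)

lemma cl_sign_conjugation:
  assumes "finite J" "finite C"
  shows "cl_sign p J C * cl_sign p (sym_diff J C) J * cl_sign p J J = (-1) ^ (card J * card C + card (J \<inter> C))"
proof -
  define P Q R where "P = J \<inter> C" and "Q = J - C" and "R = C - J"
  have fin: "finite P" "finite Q" "finite R" and disj: "P \<inter> Q = {}" "P \<inter> R = {}" "Q \<inter> R = {}"
    using assms by (auto simp: P_def Q_def R_def)
  have sets: "J = P \<union> Q" "C = P \<union> R" "sym_diff J C = Q \<union> R" "J \<inter> C = P" "(Q \<union> R) \<inter> (P \<union> Q) = Q"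
    by (auto simp: P_def Q_def R_def)
  have "card {i \<in> P \<union> Q. p < i} = card {i \<in> P. p < i} + card {i \<in> Q. p < i}"
    using fin disj by (subst card_Un_disjoint[symmetric]) (auto intro: arg_cong[where f = card])
  then have "cl_sign p J J = (-1) ^ (inversions (P \<union> Q) (P \<union> Q) + (card {i \<in> P. p < i} + card {i \<in> Q. p < i}))"
    unfolding cl_sign_eq_inversions Int_absorb sets(1) by (simp only:)
  moreover have "cl_sign p J C = (-1) ^ (inversions (P \<union> Q) (P \<union> R) + card {i \<in> P. p < i})"
    unfolding cl_sign_eq_inversions sets(4) by (simp only: sets(1,2))
  moreover have "cl_sign p (sym_diff J C) J = (-1) ^ (inversions (Q \<union> R) (P \<union> Q) + card {i \<in> Q. p < i})"
    unfolding cl_sign_eq_inversions sets(3) by (simp only: sets(1,5))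
  ultimately have "cl_sign p J C * cl_sign p (sym_diff J C) J * cl_sign p J J
      = (-1) ^ (inversions (P \<union> Q) (P \<union> R) + inversions (Q \<union> R) (P \<union> Q) + inversions (P \<union> Q) (P \<union> Q)
               + 2 * (card {i \<in> P. p < i} + card {i \<in> Q. p < i}))"
    by (simp add: power_add[symmetric] mult_2 add_ac)
  also have "\<dots> = (-1) ^ ((card P + card Q) * (card P + card R) + card P)"
    by (rule minus_one_power_eq_if_even_add) (use even_conjugation_exponent[OF fin disj] in simp)
  also have "\<dots> = (-1) ^ (card J * card C + card (J \<inter> C))"
    unfolding sets(4) using fin disj by (simp add: sets(1,2) card_Un_disjoint)
  finally show ?thesis .
qed

lemma cl_conjugate_basis_coeff:
  assumes J: "J \<subseteq> {1..p+q}" and x: "x \<in> cl_carrier p q"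
  shows "cl_mult p q (cl_mult p q (cl_basis J) x) (cl_upJ p q J) C =
           (-1) ^ (card J * card C + card (J \<inter> C)) * x C"
proof (cases "C \<subseteq> {1..p+q}")
  case True
  have "finite J" "finite C"
    using J True finite_subset by blast+
  moreover have "sym_diff J (sym_diff J C) = C" and "sym_diff J C \<subseteq> {1..p+q}"
    using J True by blast+
  ultimately show ?thesis
    using J True cl_sign_conjugation[of J C p]
    by (simp add: cl_basis_eq_monomial cl_upJ_eq_monomial cl_mult_monomial_left cl_mult_monomial_right
        algebra_simps)
next
  case False
  then have "\<not> sym_diff J C \<subseteq> {1..p+q}" and "x C = 0"
    using J x by (auto simp: cl_carrier_def)
  then show ?thesis
    unfolding cl_upJ_eq_monomial[OF J] cl_mult_monomial_right[OF J] if_not_P[OF \<open>\<not> sym_diff J C \<subseteq> {1..p+q}\<close>]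
    by simp
qed

lemma sum_Pow_prod_eq_prod_one_plus:
  fixes f :: "'a \<Rightarrow> 'b::comm_semiring_1"
  assumes "finite A"
  shows "(\<Sum>X\<in>Pow A. \<Prod>x\<in>X. f x) = (\<Prod>x\<in>A. 1 + f x)"
  using prod_add[OF assms, of f "\<lambda>_. 1"] by (simp add: add.commute)

lemma minus_one_power_conjugation_eq_prod:
  assumes "finite J"
  shows "(-1 :: 'a::comm_ring_1) ^ (card J * card C + card (J \<inter> C)) = (\<Prod>i\<in>J. (-1) ^ (card C + of_bool (i \<in> C)))"
proof -
  have "(\<Sum>i\<in>J. card C + of_bool (i \<in> C)) = card J * card C + card (J \<inter> C)"
    using assms by (simp add: sum.distrib sum_of_bool_eq)
  then show ?thesis
    by (simp add: power_sum[symmetric])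
qed

lemma sum_conjugation_signs:
  assumes "finite N" "C \<subseteq> N"
  shows "(\<Sum>J\<in>Pow N. (-1 :: real) ^ (card J * card C + card (J \<inter> C))) =
           (if C = {} \<or> C = N \<and> odd (card N) then 2 ^ card N else 0)"
proof -
  have "(\<Sum>J\<in>Pow N. (-1 :: real) ^ (card J * card C + card (J \<inter> C))) =
          (\<Prod>i\<in>N. 1 + (-1) ^ (card C + of_bool (i \<in> C)))"
    unfolding sum_Pow_prod_eq_prod_one_plus[OF assms(1), symmetric]
    using assms(1) by (intro sum.cong refl) (simp add: minus_one_power_conjugation_eq_prod rev_finite_subset)
  also have "\<dots> = (if C = {} \<or> C = N \<and> odd (card N) then 2 ^ card N else 0)"
  proof (cases "C = {} \<or> C = N \<and> odd (card N)")
    case True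
    have "(\<Prod>i\<in>N. 1 + (-1) ^ (card C + of_bool (i \<in> C))) = (\<Prod>i\<in>N. 2 :: real)"
    proof (rule prod.cong)
      fix i
      assume "i \<in> N"
      with True have "even (card C + of_bool (i \<in> C))"
        by auto
      then show "1 + (-1) ^ (card C + of_bool (i \<in> C)) = (2 :: real)"
        by simp
    qed simp
    then show ?thesis
      unfolding if_P[OF True] by simp
  next
    case False
    obtain i where "i \<in> N" "odd (card C + of_bool (i \<in> C))"
    proof (cases "even (card C)")
      case True
      with False obtain i where "i \<in> C"
        by blast
      with True that assms(2) show ?thesis
        by auto
    next
      case odd: False
      with False have "C \<noteq> N"
        by auto
      with assms(2) obtain i where "i \<in> N" "i \<notin> C"
        by blast
      with odd that show ?thesis
        by simp
    qed
    then have "(\<Prod>i\<in>N. 1 + (-1) ^ (card C + of_bool (i \<in> C))) = (0 :: real)"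
      by (intro prod_zero[OF assms(1)] bexI[of _ i]) simp_all
    then show ?thesis
      unfolding if_not_P[OF False] .
  qed
  finally show ?thesis .
qed

lemma cl_sum_conjugates_coeff:
  assumes "x \<in> cl_carrier p q"
  shows "(\<Sum>J\<in>Pow {1..p+q}. cl_mult p q (cl_mult p q (cl_basis J) x) (cl_upJ p q J) C) =
           (if C = {} \<or> C = {1..p+q} \<and> odd (p + q) then 2 ^ (p + q) * x C else 0)"
proof -
  have "(\<Sum>J\<in>Pow {1..p+q}. cl_mult p q (cl_mult p q (cl_basis J) x) (cl_upJ p q J) C) =
          (\<Sum>J\<in>Pow {1..p+q}. (-1) ^ (card J * card C + card (J \<inter> C))) * x C"
    using assms by (simp add: cl_conjugate_basis_coeff sum_distrib_right)
  moreover have "x C = 0" if "\<not> C \<subseteq> {1..p+q}"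
    using assms that by (simp add: cl_carrier_def)
  ultimately show ?thesis
    by (cases "C \<subseteq> {1..p+q}") (auto simp: sum_conjugation_signs)
qed

lemma cl_star_carrier: "a \<in> cl_carrier p q \<Longrightarrow> cl_star a \<in> cl_carrier p q"
  by (simp add: cl_carrier_def cl_star_def)

theorem theorem1:
  fixes p q :: nat and a :: cl
  assumes "p + q \<ge> 1"
    and "a \<in> cl_carrier p q"
  shows "(even (p + q) \<longrightarrow>
            (\<forall>C. cl_grade0 a C = 1 / 2 ^ (p + q) *
               (\<Sum>J\<in>Pow {1..p+q}. cl_mult p q (cl_mult p q (cl_basis J) a) (cl_upJ p q J) C)))
       \<and> (odd (p + q) \<longrightarrow>
            (\<forall>C. cl_grade0 a C = 1 / 2 ^ (p + q + 1) *
               (\<Sum>J\<in>Pow {1..p+q}. cl_mult p q (cl_mult p q (cl_basis J) a) (cl_upJ p q J) C)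
             + 1 / 2 ^ (p + q + 1) *
               (\<Sum>J\<in>Pow {1..p+q}. cl_mult p q (cl_mult p q (cl_basis J) (cl_star a)) (cl_upJ p q J) C)))"
proof (intro conjI impI allI)
  fix C
  show "cl_grade0 a C = 1 / 2 ^ (p + q) *
          (\<Sum>J\<in>Pow {1..p+q}. cl_mult p q (cl_mult p q (cl_basis J) a) (cl_upJ p q J) C)"
    if "even (p + q)"
    using that unfolding cl_sum_conjugates_coeff[OF assms(2)] by (simp add: cl_grade0_def)
  assume odd: "odd (p + q)"
  have "cl_grade0 a C = (if C = {} \<or> C = {1..p+q} then 2 ^ (p + q) * (a C + cl_star a C) else 0) / 2 ^ (p + q + 1)"
  proof (cases "C = {}")
    case False
    then show ?thesis
      using odd by (simp add: cl_grade0_def cl_star_def)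
  qed (simp add: cl_grade0_def cl_star_def)
  then show "cl_grade0 a C = 1 / 2 ^ (p + q + 1) *
          (\<Sum>J\<in>Pow {1..p+q}. cl_mult p q (cl_mult p q (cl_basis J) a) (cl_upJ p q J) C)
        + 1 / 2 ^ (p + q + 1) *
          (\<Sum>J\<in>Pow {1..p+q}. cl_mult p q (cl_mult p q (cl_basis J) (cl_star a)) (cl_upJ p q J) C)"
    unfolding cl_sum_conjugates_coeff[OF assms(2)] cl_sum_conjugates_coeff[OF cl_star_carrier[OF assms(2)]]
    using odd by (simp add: add_divide_distrib distrib_left)
qed

end
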